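(* Let $\mathcal L$ be a finite-dimensional Lie algebra over $\mathbb Q_p$ with $(\mathcal L,\mathcal L)=\mathcal L$, of dimension $d$, and let $\sigma$ be a Lie algebra automorphism of $\mathcal L$ of order $2$, with type $t_\sigma(\mathcal L)=(a,b)$. Then $a\ne0$ and $b>1$.
   Context: $t_\sigma(\mathcal L)=(a,b)$ with $a=\dim\ker(\sigma-\mathrm{id})$ and $b=\dim\ker(\sigma+\mathrm{id})$, so $a+b=d$. *)

theory Defs
  imports Complex_Main "HOL-Computational_Algebra.Primes"
begin

text \<open>The field Q_p, characterised up to isomorphism: a field K with an absolute
value N which extends the p-adic absolute value of the rationals, in which the
rationals are dense and which is complete with respect to N (i.e. K is the completion
of Q with respect to the p-adic absolute value).\<close>

definition padic_abs_int :: "nat \<Rightarrow> int \<Rightarrow> real" where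
  "padic_abs_int p n = (if n = 0 then 0 else real p powr (- real (multiplicity (int p) n)))"

definition is_Qp :: "nat \<Rightarrow> ('k::field \<Rightarrow> real) \<Rightarrow> bool" where
  "is_Qp p N \<longleftrightarrow>
     prime p \<and>
     (\<forall>x. N x \<ge> 0) \<and> (\<forall>x. N x = 0 \<longleftrightarrow> x = 0) \<and>
     (\<forall>x y. N (x * y) = N x * N y) \<and> (\<forall>x y. N (x + y) \<le> N x + N y) \<and>
     (\<forall>n::int. N (of_int n) = padic_abs_int p n) \<and>
     (\<forall>x e. e > 0 \<longrightarrow> (\<exists>a b::int. b \<noteq> 0 \<and> N (x - of_int a / of_int b) < e)) \<and>
     (\<forall>X::nat \<Rightarrow> 'k. (\<forall>e>0. \<exists>M. \<forall>m\<ge>M. \<forall>n\<ge>M. N (X m - X n) < e) \<longrightarrow>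
         (\<exists>L. \<forall>e>0. \<exists>M. \<forall>n\<ge>M. N (X n - L) < e))"

definition lie_algebra :: "('k::field \<Rightarrow> 'v::ab_group_add \<Rightarrow> 'v) \<Rightarrow> ('v \<Rightarrow> 'v \<Rightarrow> 'v) \<Rightarrow> bool" where
  "lie_algebra scale br \<longleftrightarrow>
     vector_space scale \<and>
     (\<forall>x y z. br (x + y) z = br x z + br y z) \<and>
     (\<forall>c x y. br (scale c x) y = scale c (br x y)) \<and>
     (\<forall>x y z. br x (y + z) = br x y + br x z) \<and>
     (\<forall>c x y. br x (scale c y) = scale c (br x y)) \<and>
     (\<forall>x. br x x = 0) \<and>
     (\<forall>x y z. br x (br y z) + br y (br z x) + br z (br x y) = 0)"

definition finite_dim_lie :: "('k::field \<Rightarrow> 'v::ab_group_add \<Rightarrow> 'v) \<Rightarrow> bool" where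
  "finite_dim_lie scale \<longleftrightarrow> (\<exists>B. finite B \<and> module.span scale B = UNIV)"

definition perfect_lie :: "('k::field \<Rightarrow> 'v::ab_group_add \<Rightarrow> 'v) \<Rightarrow> ('v \<Rightarrow> 'v \<Rightarrow> 'v) \<Rightarrow> bool" where
  "perfect_lie scale br \<longleftrightarrow> module.span scale {br x y | x y. True} = UNIV"

definition lie_automorphism :: "('k::field \<Rightarrow> 'v::ab_group_add \<Rightarrow> 'v) \<Rightarrow> ('v \<Rightarrow> 'v \<Rightarrow> 'v) \<Rightarrow> ('v \<Rightarrow> 'v) \<Rightarrow> bool" where
  "lie_automorphism scale br \<sigma> \<longleftrightarrow>
     Vector_Spaces.linear scale scale \<sigma> \<and> bij \<sigma> \<and> (\<forall>x y. \<sigma> (br x y) = br (\<sigma> x) (\<sigma> y))"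

definition has_order_two :: "('v \<Rightarrow> 'v) \<Rightarrow> bool" where
  "has_order_two \<sigma> \<longleftrightarrow> \<sigma> \<circ> \<sigma> = id \<and> \<sigma> \<noteq> id"

definition lie_type :: "('k::field \<Rightarrow> 'v::ab_group_add \<Rightarrow> 'v) \<Rightarrow> ('v \<Rightarrow> 'v) \<Rightarrow> nat \<times> nat" where
  "lie_type scale \<sigma> = (vector_space.dim scale {x. \<sigma> x - x = 0}, vector_space.dim scale {x. \<sigma> x + x = 0})"

end

theory Submission
  imports Defs
begin

text \<open>Since 2 is invertible in \<open>\<rat>\<^sub>p\<close>, the involution \<open>\<sigma>\<close> splits \<open>L\<close> into its eigenspaces
\<open>L\<^sub>+ \<oplus> L\<^sub>-\<close> for \<open>\<plusminus>1\<close>, with \<open>[L\<^sub>\<plusminus>, L\<^sub>\<plusminus>] \<subseteq> L\<^sub>+\<close> and \<open>[L\<^sub>+, L\<^sub>-] \<subseteq> L\<^sub>-\<close>. If \<open>L\<^sub>+ = 0\<close>, every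
bracket lies in \<open>L\<^sub>+\<close>, so \<open>L\<close> is abelian; being perfect it is \<open>0\<close>, and then \<open>\<sigma> = id\<close>. If
\<open>L\<^sub>-\<close> lies in a line \<open>k w\<close>, then \<open>[L\<^sub>-, L\<^sub>-] = 0\<close> and \<open>L\<^sub>+\<close> acts on \<open>w\<close> by scalars, so by
Jacobi \<open>[L\<^sub>+, L\<^sub>+]\<close> kills \<open>w\<close>. Hence the even part of every bracket kills \<open>w\<close>, and by
perfectness all of \<open>L\<^sub>+\<close> does; then \<open>[L, L] \<subseteq> L\<^sub>+\<close>, so \<open>L = L\<^sub>+\<close> and again \<open>\<sigma> = id\<close>.\<close>

lemma is_Qp_of_int_neq_0:
  assumes "is_Qp p (N :: 'k::field \<Rightarrow> real)" and "n \<noteq> 0"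
  shows "(of_int n :: 'k) \<noteq> 0"
proof -
  have "prime p" and "N (of_int n) = padic_abs_int p n" and "\<forall>x. N x = 0 \<longleftrightarrow> x = 0"
    using assms(1) unfolding is_Qp_def by blast+
  moreover have "padic_abs_int p n > 0"
    using \<open>prime p\<close> assms(2) by (simp add: padic_abs_int_def prime_gt_0_nat)
  ultimately have "N (of_int n) \<noteq> 0" by simp
  with \<open>\<forall>x. N x = 0 \<longleftrightarrow> x = 0\<close> show ?thesis by blast
qed

lemma (in vector_space) finite_basis_of_subset:
  assumes "finite F" and "span F = UNIV"
  obtains B where "finite B" "card B = dim S" "S \<subseteq> span B"
proof -
  obtain B where B: "B \<subseteq> S" "independent B" "S \<subseteq> span B" "card B = dim S"
    by (rule basis_exists)
  have "finite B"
    using independent_span_bound[OF assms(1) B(2)] assms(2) by auto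
  with B that show thesis by blast
qed

lemma (in vector_space) subset_zero_if_dim_eq_0:
  assumes "finite F" and "span F = UNIV" and "dim S = 0"
  shows "S \<subseteq> {0}"
  using finite_basis_of_subset[OF assms(1,2), of S] assms(3) by auto

lemma (in vector_space) subset_span_singleton_if_dim_le_1:
  assumes "finite F" and "span F = UNIV" and "dim S \<le> 1"
  obtains v where "S \<subseteq> span {v}"
proof -
  obtain B where B: "finite B" "card B \<le> 1" "S \<subseteq> span B"
    using finite_basis_of_subset[OF assms(1,2), of S] assms(3) by metis
  then have "\<forall>u\<in>B. \<forall>v\<in>B. u = v"
    using card_le_Suc0_iff_eq by auto
  then obtain v where "B \<subseteq> {v}"
    by blast
  with B(3) that show thesis
    using span_mono by blast
qed

locale lie_alg =
  fixes scale :: "'k::field \<Rightarrow> 'v::ab_group_add \<Rightarrow> 'v" and br :: "'v \<Rightarrow> 'v \<Rightarrow> 'v"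
  assumes lie: "lie_algebra scale br"
begin

sublocale vector_space scale
  using lie unfolding lie_algebra_def by blast

lemma bracket_add_left: "br (x + y) z = br x z + br y z"
  and bracket_scale_left: "br (scale c x) y = scale c (br x y)"
  and bracket_add_right: "br x (y + z) = br x y + br x z"
  and bracket_scale_right: "br x (scale c y) = scale c (br x y)"
  and bracket_self: "br x x = 0"
  and jacobi: "br x (br y z) + br y (br z x) + br z (br x y) = 0"
  using lie unfolding lie_algebra_def by blast+

lemma bracket_zero_left [simp]: "br 0 y = 0"
  using bracket_add_left[of 0 0 y] by simp

lemma bracket_zero_right [simp]: "br x 0 = 0"
  using bracket_add_right[of x 0 0] by simp

lemma bracket_minus_left: "br (- x) y = - br x y"
  using bracket_add_left[of x "- x" y] by (simp add: add.inverse_unique)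

lemma bracket_minus_right: "br x (- y) = - br x y"
  using bracket_add_right[of x y "- y"] by (simp add: add.inverse_unique)

lemma bracket_anticomm: "br x y = - br y x"
proof -
  have "br x y + br y x = br (x + y) (x + y)"
    by (subst bracket_add_left, subst (1 2) bracket_add_right) (simp add: bracket_self)
  also have "\<dots> = 0" by (rule bracket_self)
  finally show ?thesis by (metis add.inverse_unique add.commute)
qed

lemma perfect_lie_subspace_eq_UNIV:
  assumes "perfect_lie scale br" and "subspace T" and "\<And>x y. br x y \<in> T"
  shows "T = UNIV"
  using span_minimal[of "{br x y |x y. True}" T] assms unfolding perfect_lie_def by blast

end

locale lie_involution = lie_alg scale br
  for scale :: "'k::field \<Rightarrow> 'v::ab_group_add \<Rightarrow> 'v" and br +
  fixes \<sigma> :: "'v \<Rightarrow> 'v"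
  assumes automorphism: "lie_automorphism scale br \<sigma>"
    and involutive: "\<sigma> \<circ> \<sigma> = id"
    and two_neq_0: "(2::'k) \<noteq> 0"
begin

lemma sigma_linear: "Vector_Spaces.linear scale scale \<sigma>"
  and sigma_bracket: "\<sigma> (br x y) = br (\<sigma> x) (\<sigma> y)"
  using automorphism unfolding lie_automorphism_def by blast+

lemma sigma_add: "\<sigma> (x + y) = \<sigma> x + \<sigma> y"
  and sigma_scale: "\<sigma> (scale c x) = scale c (\<sigma> x)"
  using sigma_linear unfolding Vector_Spaces.linear_iff by blast+

lemma sigma_sigma [simp]: "\<sigma> (\<sigma> x) = x"
  using fun_cong[OF involutive, of x] by simp

lemma sigma_minus: "\<sigma> (- x) = - \<sigma> x"
  using sigma_scale[of "- 1" x] by simp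

lemma sigma_diff: "\<sigma> (x - y) = \<sigma> x - \<sigma> y"
  using sigma_add[of x "- y"] by (simp add: sigma_minus)

lemma scale_half_double [simp]: "scale (1 / 2) (x + x) = x"
proof -
  have "scale (1 / 2) (x + x) = scale (1 / 2 + 1 / 2) x"
    by (simp only: scale_left_distrib scale_right_distrib)
  also have "1 / 2 + 1 / 2 = (1::'k)"
    using two_neq_0 by (simp flip: add_divide_distrib)
  finally show ?thesis by simp
qed

definition even_part :: "'v \<Rightarrow> 'v" where
  "even_part x = scale (1 / 2) (x + \<sigma> x)"

definition odd_part :: "'v \<Rightarrow> 'v" where
  "odd_part x = scale (1 / 2) (x - \<sigma> x)"

lemma even_odd_decomp: "even_part x + odd_part x = x"
proof -
  have "even_part x + odd_part x = scale (1 / 2) (x + \<sigma> x + (x - \<sigma> x))"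
    unfolding even_part_def odd_part_def by (simp only: scale_right_distrib)
  also have "x + \<sigma> x + (x - \<sigma> x) = x + x" by simp
  finally show ?thesis by (simp only: scale_half_double)
qed

lemma sigma_even_part [simp]: "\<sigma> (even_part x) = even_part x"
  unfolding even_part_def by (simp add: sigma_scale sigma_add add.commute)

lemma sigma_odd_part [simp]: "\<sigma> (odd_part x) = - odd_part x"
  unfolding odd_part_def by (simp add: sigma_scale sigma_diff flip: scale_minus_right)

lemma even_part_zero [simp]: "even_part 0 = 0"
  and odd_part_zero [simp]: "odd_part 0 = 0"
  using sigma_scale[of 0 0] by (simp_all add: even_part_def odd_part_def)

lemma even_part_add: "even_part (x + y) = even_part x + even_part y"
  unfolding even_part_def by (simp add: sigma_add add_ac flip: scale_right_distrib)

lemma odd_part_add: "odd_part (x + y) = odd_part x + odd_part y"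
  unfolding odd_part_def by (simp add: sigma_add flip: scale_right_distrib)

lemma even_part_scale: "even_part (scale c x) = scale c (even_part x)"
  unfolding even_part_def by (simp add: sigma_scale mult.commute flip: scale_right_distrib)

lemma odd_part_scale: "odd_part (scale c x) = scale c (odd_part x)"
  unfolding odd_part_def by (simp add: sigma_scale mult.commute flip: scale_right_diff_distrib)

lemma even_part_of_fixed: "\<sigma> w = w \<Longrightarrow> even_part w = w"
  and even_part_of_antifixed: "\<sigma> w = - w \<Longrightarrow> even_part w = 0"
  and odd_part_of_fixed: "\<sigma> w = w \<Longrightarrow> odd_part w = 0"
  and odd_part_of_antifixed: "\<sigma> w = - w \<Longrightarrow> odd_part w = w"
  by (simp_all add: even_part_def odd_part_def)

lemma even_part_bracket:
  "even_part (br x y) = br (even_part x) (even_part y) + br (odd_part x) (odd_part y)"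
  and odd_part_bracket:
  "odd_part (br x y) = br (even_part x) (odd_part y) + br (odd_part x) (even_part y)"
proof -
  let ?xp = "even_part x" and ?xm = "odd_part x"
    and ?yp = "even_part y" and ?ym = "odd_part y"
  have split: "br x y = br ?xp ?yp + br ?xp ?ym + br ?xm ?yp + br ?xm ?ym"
    using even_odd_decomp[of x] even_odd_decomp[of y]
    by (metis bracket_add_left bracket_add_right add.assoc)
  have "\<sigma> (br ?xp ?yp) = br ?xp ?yp" "\<sigma> (br ?xp ?ym) = - br ?xp ?ym"
    "\<sigma> (br ?xm ?yp) = - br ?xm ?yp" "\<sigma> (br ?xm ?ym) = br ?xm ?ym"
    by (simp_all add: sigma_bracket bracket_minus_left bracket_minus_right)
  note parts = even_part_of_fixed[OF this(1)] even_part_of_antifixed[OF this(2)]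
    even_part_of_antifixed[OF this(3)] even_part_of_fixed[OF this(4)]
    odd_part_of_fixed[OF this(1)] odd_part_of_antifixed[OF this(2)]
    odd_part_of_antifixed[OF this(3)] odd_part_of_fixed[OF this(4)]
  show "even_part (br x y) = br ?xp ?yp + br ?xm ?ym"
    by (subst split) (simp add: even_part_add parts)
  show "odd_part (br x y) = br ?xp ?ym + br ?xm ?yp"
    by (subst split) (simp add: odd_part_add parts add.assoc)
qed

lemma sigma_eq_id_if_fixed_space_trivial:
  assumes "perfect_lie scale br" and "{x. \<sigma> x - x = 0} \<subseteq> {0}"
  shows "\<sigma> = id"
proof -
  have "even_part x \<in> {x. \<sigma> x - x = 0}" for x by simp
  then have "even_part x = 0" for x
    using assms(2) by blast
  then have odd: "odd_part x = x" for x
    using even_odd_decomp[of x] by simp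
  have "br x y = 0" for x y
  proof -
    have "br x y = - br x y"
      using odd_part_bracket[of x y] by (simp add: odd \<open>\<And>x. even_part x = 0\<close>)
    then have "scale (1 / 2) (br x y + br x y) = 0"
      by (metis add.right_inverse scale_zero_right)
    then show ?thesis by (simp only: scale_half_double)
  qed
  then have "{0} = (UNIV :: 'v set)"
    using perfect_lie_subspace_eq_UNIV[OF assms(1) subspace_single_0] by simp
  then show ?thesis by (metis UNIV_I empty_iff insert_iff ext id_apply)
qed

text \<open>Jacobi identity with \<open>[u\<^sub>i, w] = c\<^sub>i w\<close>: \<open>[[u\<^sub>1,u\<^sub>2],w] = c\<^sub>2c\<^sub>1w - c\<^sub>1c\<^sub>2w = 0\<close>.\<close>
lemma bracket_of_eigenvector_brackets:
  assumes "br u\<^sub>1 w = scale c\<^sub>1 w" and "br u\<^sub>2 w = scale c\<^sub>2 w"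
  shows "br (br u\<^sub>1 u\<^sub>2) w = 0"
proof -
  have "br w (br u\<^sub>1 u\<^sub>2) + br u\<^sub>1 (br u\<^sub>2 w) + br u\<^sub>2 (br w u\<^sub>1) = 0" by (rule jacobi)
  moreover have "br u\<^sub>1 (br u\<^sub>2 w) = scale (c\<^sub>2 * c\<^sub>1) w"
    using assms by (simp add: bracket_scale_right)
  moreover have "br u\<^sub>2 (br w u\<^sub>1) = - scale (c\<^sub>1 * c\<^sub>2) w"
    using assms bracket_anticomm[of w u\<^sub>1] by (simp add: bracket_scale_right bracket_minus_right)
  ultimately have "br w (br u\<^sub>1 u\<^sub>2) = 0" by (simp add: mult.commute)
  then show ?thesis using bracket_anticomm[of "br u\<^sub>1 u\<^sub>2" w] by simp
qed

lemma bracket_even_part_eq_0_if_odd_parts_in_line: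
  assumes "perfect_lie scale br" and "\<sigma> w = - w" and line: "\<And>x. \<exists>c. odd_part x = scale c w"
  shows "br (even_part z) w = 0"
proof -
  have eigen: "\<exists>c. br (even_part u) w = scale c w" for u
  proof -
    have "br (even_part u) w = odd_part (br (even_part u) w)"
      by (simp add: assms(2) odd_part_of_antifixed sigma_bracket bracket_minus_right)
    then show ?thesis by (metis line)
  qed
  have odd_odd: "br (odd_part x) (odd_part y) = 0" for x y
    using line[of x] line[of y]
    by (auto simp: bracket_scale_left bracket_scale_right bracket_self)
  have "{z. br (even_part z) w = 0} = UNIV"
  proof (rule perfect_lie_subspace_eq_UNIV[OF assms(1)])
    show "subspace {z. br (even_part z) w = 0}"
      by (simp add: subspace_def even_part_add even_part_scale
          bracket_add_left bracket_scale_left)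
    show "br x y \<in> {z. br (even_part z) w = 0}" for x y
    proof -
      obtain c\<^sub>1 c\<^sub>2 where "br (even_part x) w = scale c\<^sub>1 w" "br (even_part y) w = scale c\<^sub>2 w"
        using eigen by blast
      then have "br (br (even_part x) (even_part y)) w = 0"
        by (rule bracket_of_eigenvector_brackets)
      then show ?thesis by (simp add: even_part_bracket odd_odd)
    qed
  qed
  then show ?thesis by blast
qed

lemma sigma_eq_id_if_antifixed_space_in_line:
  assumes "perfect_lie scale br" and "{x. \<sigma> x + x = 0} \<subseteq> span {v}"
  shows "\<sigma> = id"
proof -
  define w where "w = odd_part v"
  have line: "\<exists>c. odd_part x = scale c w" for x
  proof -
    have "odd_part x \<in> {x. \<sigma> x + x = 0}" by simp
    then have "odd_part x \<in> span {v}" using assms(2) by blast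
    then obtain c where "odd_part x = scale c v" by (auto simp: span_singleton)
    then have "odd_part (odd_part x) = scale c w" by (simp add: w_def odd_part_scale)
    then show ?thesis by (auto simp: odd_part_of_antifixed)
  qed
  have even_odd: "br (even_part x) (odd_part y) = 0" for x y
  proof -
    obtain c where "odd_part y = scale c w" using line by blast
    moreover have "br (even_part x) w = 0"
      using bracket_even_part_eq_0_if_odd_parts_in_line[OF assms(1) _ line] by (simp add: w_def)
    ultimately show ?thesis by (simp add: bracket_scale_right)
  qed
  have "{z. odd_part z = 0} = UNIV"
  proof (rule perfect_lie_subspace_eq_UNIV[OF assms(1)])
    show "subspace {z. odd_part z = 0}"
      by (simp add: subspace_def odd_part_add odd_part_scale)
    show "br x y \<in> {z. odd_part z = 0}" for x y
      using bracket_anticomm[of "odd_part x" "even_part y"]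
      by (simp add: odd_part_bracket even_odd)
  qed
  then have "odd_part x = 0" for x by blast
  then have "even_part x = x" for x
    using even_odd_decomp[of x] by simp
  then show ?thesis by (metis sigma_even_part ext id_apply)
qed

end

theorem mainTheorem13:
  fixes p :: nat and N :: "'k::field \<Rightarrow> real"
    and scale :: "'k \<Rightarrow> 'v::ab_group_add \<Rightarrow> 'v" and br :: "'v \<Rightarrow> 'v \<Rightarrow> 'v"
    and \<sigma> :: "'v \<Rightarrow> 'v" and a b :: nat
  assumes "is_Qp p N"
    and "lie_algebra scale br"
    and "finite_dim_lie scale"
    and "perfect_lie scale br"
    and "lie_automorphism scale br \<sigma>"
    and "has_order_two \<sigma>"
    and "lie_type scale \<sigma> = (a, b)"
  shows "a \<noteq> 0 \<and> b > 1"
proof -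
  have "(2::'k) \<noteq> 0"
    using is_Qp_of_int_neq_0[OF assms(1), of 2] by simp
  then interpret lie_involution scale br \<sigma>
    using assms(2,5,6) by unfold_locales (auto simp: has_order_two_def)
  obtain F where F: "finite F" "span F = UNIV"
    using assms(3) unfolding finite_dim_lie_def by blast
  have "dim {x. \<sigma> x - x = 0} = a" and "dim {x. \<sigma> x + x = 0} = b"
    using assms(7) unfolding lie_type_def by simp_all
  then have "a = 0 \<Longrightarrow> \<sigma> = id" and "b \<le> 1 \<Longrightarrow> \<sigma> = id"
    using subset_zero_if_dim_eq_0[OF F] subset_span_singleton_if_dim_le_1[OF F]
      sigma_eq_id_if_fixed_space_trivial[OF assms(4)]
      sigma_eq_id_if_antifixed_space_in_line[OF assms(4)]
    by blast+
  moreover have "\<sigma> \<noteq> id"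
    using assms(6) unfolding has_order_two_def by blast
  ultimately show ?thesis by linarith
qed

end
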